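(* Let $\Lambda_1, \Lambda_2$ be integral lattices. Any isomorphism of $\rho$-invariants $\varphi: (C(\Lambda_1),\rho_1) \to (C(\Lambda_2),\rho_2)$ induces an isomorphism of discriminant forms $\varphi: (\overline{\Lambda}_1, b_1) \to (\overline{\Lambda}_2, b_2)$ (namely the group isomorphism underlying the torsor isomorphism preserves the discriminant forms).
   Context: A lattice is a finitely generated free abelian group $\Lambda$ with a non-degenerate symmetric $\mathbb{Q}$-valued bilinear form $\langle\,,\rangle$, integral if valued in $\mathbb{Z}$; $|x| = \langle x,x\rangle$; $\sigma(\Lambda)$ is the signature. $\Lambda^* = \{x\in\Lambda\otimes\mathbb{Q}: \langle x,y\rangle\in\mathbb{Z}\ \forall y\in\Lambda\}$, $\overline{\Lambda} = \Lambda^*/\Lambda$, with discriminant form $b(\bar x,\bar y) \equiv \langle x,y\rangle \pmod 1$, $b:\overline{\Lambda}\times\overline{\Lambda}\to\mathbb{Q}/\mathbb{Z}$. $\mathrm{Char}(\Lambda) = \{\chi\in\Lambda^*: \langle\chi,y\rangle\equiv|y| \pmod 2\ \forall y\in\Lambda\}$, $C(\Lambda) = \mathrm{Char}(\Lambda)/2\Lambda$, a torsor over $2\Lambda^*/2\Lambda\cong\overline{\Lambda}$ via $[\chi]+\bar x = [\chi+2x]$. $\rho: C(\Lambda)\to\mathbb{Q}/2\mathbb{Z}$, $\rho([\chi]) \equiv (|\chi| - \sigma(\Lambda))/4 \pmod 2$. An isomorphism $(C(\Lambda_1),\rho_1)\to(C(\Lambda_2),\rho_2)$ is a bijection $\varphi: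 C(\Lambda_1)\to C(\Lambda_2)$ and a group isomorphism $\varphi: \overline{\Lambda}_1\to\overline{\Lambda}_2$ with $\rho_2\circ\varphi = \rho_1$ and $\varphi(c)-\varphi(c') = \varphi(c-c')$. An isomorphism of discriminant forms is a group isomorphism $\varphi$ with $b_2(\varphi\bar x,\varphi\bar y) = b_1(\bar x,\bar y)$. *)

theory Defs
  imports Complex_Main
begin

text \<open>An integral lattice of rank CARD('n) is represented by its Gram matrix
  G :: 'n \<Rightarrow> 'n \<Rightarrow> int with respect to a basis.  Lambda = integer vectors in 'n \<Rightarrow> rat,
  Lambda \<otimes> Q = all of 'n \<Rightarrow> rat.\<close>

definition bil :: "('n::finite \<Rightarrow> 'n \<Rightarrow> int) \<Rightarrow> ('n \<Rightarrow> rat) \<Rightarrow> ('n \<Rightarrow> rat) \<Rightarrow> rat" where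
  "bil G x y = (\<Sum>i\<in>UNIV. \<Sum>j\<in>UNIV. x i * of_int (G i j) * y j)"

definition is_int_lattice :: "('n::finite \<Rightarrow> 'n \<Rightarrow> int) \<Rightarrow> bool" where
  "is_int_lattice G \<longleftrightarrow> (\<forall>i j. G i j = G j i) \<and>
     (\<forall>x. (\<forall>y. bil G x y = 0) \<longrightarrow> x = (\<lambda>i. 0))"

definition latt :: "('n::finite \<Rightarrow> rat) set" where
  "latt = {x. \<forall>i. x i \<in> \<int>}"

definition dual :: "('n::finite \<Rightarrow> 'n \<Rightarrow> int) \<Rightarrow> ('n \<Rightarrow> rat) set" where
  "dual G = {x. \<forall>y\<in>latt. bil G x y \<in> \<int>}"

definition chars :: "('n::finite \<Rightarrow> 'n \<Rightarrow> int) \<Rightarrow> ('n \<Rightarrow> rat) set" where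
  "chars G = {c \<in> dual G. \<forall>y\<in>latt. \<exists>k::int. bil G c y - bil G y y = 2 * of_int k}"

definition qreal :: "('n::finite \<Rightarrow> 'n \<Rightarrow> int) \<Rightarrow> ('n \<Rightarrow> real) \<Rightarrow> real" where
  "qreal G x = (\<Sum>i\<in>UNIV. \<Sum>j\<in>UNIV. x i * of_int (G i j) * x j)"

definition pos_index :: "('n::finite \<Rightarrow> 'n \<Rightarrow> int) \<Rightarrow> nat" where
  "pos_index G = Max {k. \<exists>v :: nat \<Rightarrow> 'n \<Rightarrow> real. \<forall>c :: nat \<Rightarrow> real.
      (\<exists>i<k. c i \<noteq> 0) \<longrightarrow> qreal G (\<lambda>t. \<Sum>i<k. c i * v i t) > 0}"

definition neg_index :: "('n::finite \<Rightarrow> 'n \<Rightarrow> int) \<Rightarrow> nat" where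
  "neg_index G = pos_index (\<lambda>i j. - G i j)"

definition signature :: "('n::finite \<Rightarrow> 'n \<Rightarrow> int) \<Rightarrow> int" where
  "signature G = int (pos_index G) - int (neg_index G)"

definition disc :: "('n::finite \<Rightarrow> 'n \<Rightarrow> int) \<Rightarrow> ('n \<Rightarrow> rat) set set" where
  "disc G = {{(\<lambda>i. x i + y i) | y. y \<in> latt} | x. x \<in> dual G}"

definition coset_add :: "('n \<Rightarrow> rat) set \<Rightarrow> ('n \<Rightarrow> rat) set \<Rightarrow> ('n \<Rightarrow> rat) set" where
  "coset_add X Y = {(\<lambda>i. x i + y i) | x y. x \<in> X \<and> y \<in> Y}"

text \<open>Discriminant form with values in Q/Z, represented as cosets of Z in Q.\<close>
definition disc_form :: "('n::finite \<Rightarrow> 'n \<Rightarrow> int) \<Rightarrow> ('n \<Rightarrow> rat) set \<Rightarrow> ('n \<Rightarrow> rat) set \<Rightarrow> rat set" where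
  "disc_form G X Y = {bil G x y + of_int k | x y k. x \<in> X \<and> y \<in> Y}"

text \<open>C(Lambda) = Char(Lambda)/2 Lambda, as the set of cosets chi + 2 Lambda.\<close>
definition charclasses :: "('n::finite \<Rightarrow> 'n \<Rightarrow> int) \<Rightarrow> ('n \<Rightarrow> rat) set set" where
  "charclasses G = {{(\<lambda>i. c i + 2 * y i) | y. y \<in> latt} | c. c \<in> chars G}"

text \<open>Torsor difference: [chi] - [chi'] = (chi - chi')/2 mod Lambda (the unique x with [chi'] + x = [chi]).\<close>
definition char_diff :: "('n \<Rightarrow> rat) set \<Rightarrow> ('n \<Rightarrow> rat) set \<Rightarrow> ('n \<Rightarrow> rat) set" where
  "char_diff C C' = {(\<lambda>i. (a i - b i) / 2) | a b. a \<in> C \<and> b \<in> C'}"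

text \<open>rho-invariant with values in Q/2Z, represented as cosets of 2Z in Q.\<close>
definition rho :: "('n::finite \<Rightarrow> 'n \<Rightarrow> int) \<Rightarrow> ('n \<Rightarrow> rat) set \<Rightarrow> rat set" where
  "rho G C = {(bil G c c - of_int (signature G)) / 4 + 2 * of_int k | c k. c \<in> C}"

definition rho_iso ::
  "('n::finite \<Rightarrow> 'n \<Rightarrow> int) \<Rightarrow> ('m::finite \<Rightarrow> 'm \<Rightarrow> int)
   \<Rightarrow> (('n \<Rightarrow> rat) set \<Rightarrow> ('m \<Rightarrow> rat) set) \<Rightarrow> (('n \<Rightarrow> rat) set \<Rightarrow> ('m \<Rightarrow> rat) set) \<Rightarrow> bool" where
  "rho_iso G1 G2 phiC phiD \<longleftrightarrow>
     bij_betw phiC (charclasses G1) (charclasses G2) \<and>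
     bij_betw phiD (disc G1) (disc G2) \<and>
     (\<forall>X\<in>disc G1. \<forall>Y\<in>disc G1. phiD (coset_add X Y) = coset_add (phiD X) (phiD Y)) \<and>
     (\<forall>C\<in>charclasses G1. rho G2 (phiC C) = rho G1 C) \<and>
     (\<forall>C\<in>charclasses G1. \<forall>C'\<in>charclasses G1.
        char_diff (phiC C) (phiC C') = phiD (char_diff C C'))"

definition disc_form_iso ::
  "('n::finite \<Rightarrow> 'n \<Rightarrow> int) \<Rightarrow> ('m::finite \<Rightarrow> 'm \<Rightarrow> int)
   \<Rightarrow> (('n \<Rightarrow> rat) set \<Rightarrow> ('m \<Rightarrow> rat) set) \<Rightarrow> bool" where
  "disc_form_iso G1 G2 phiD \<longleftrightarrow>
     bij_betw phiD (disc G1) (disc G2) \<and>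
     (\<forall>X\<in>disc G1. \<forall>Y\<in>disc G1. phiD (coset_add X Y) = coset_add (phiD X) (phiD Y)) \<and>
     (\<forall>X\<in>disc G1. \<forall>Y\<in>disc G1. disc_form G2 (phiD X) (phiD Y) = disc_form G1 X Y)"

end

theory Submission
  imports Defs "HOL-Analysis.Analysis"
begin

text \<open>For a characteristic vector c and x, y in \<open>\<Lambda>\<^sup>*\<close>, polarization gives
  \<open>|c + 2x + 2y| - |c + 2x| - |c + 2y| + |c| = 8\<langle>x, y\<rangle>\<close>.  Hence \<open>b(x, y)\<close> is half the
  alternating sum of the \<open>\<rho>\<close>-invariants of the four characteristic classes
  \<open>[c], [c] + x, [c] + y, [c] + x + y\<close>, read modulo 1.  This expression involves only \<open>\<rho>\<close>
  and the torsor structure, so any isomorphism of \<open>\<rho>\<close>-invariants preserves it.  Such a square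
  of classes exists because a non-degenerate integral lattice has a characteristic vector.\<close>

lemma bil_add_left: "bil G (\<lambda>i. x i + y i) z = bil G x z + bil G y z"
  unfolding bil_def by (simp add: distrib_right sum.distrib)

lemma bil_add_right: "bil G z (\<lambda>i. x i + y i) = bil G z x + bil G z y"
  unfolding bil_def by (simp add: distrib_left sum.distrib)

lemma bil_diff_left: "bil G (\<lambda>i. x i - y i) z = bil G x z - bil G y z"
  unfolding bil_def by (simp add: left_diff_distrib sum_subtractf)

lemma bil_scale_left: "bil G (\<lambda>i. a * x i) z = a * bil G x z"
  unfolding bil_def by (simp add: sum_distrib_left mult.assoc)

lemma bil_scale_right: "bil G z (\<lambda>i. a * x i) = a * bil G z x"
  unfolding bil_def by (simp add: sum_distrib_left mult.assoc mult.left_commute)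

lemma bil_half_left: "bil G (\<lambda>i. x i / 2) z = bil G x z / 2"
  unfolding bil_def by (simp add: sum_divide_distrib)

lemma bil_commute:
  assumes "\<forall>i j. G i j = G j i"
  shows "bil G x y = bil G y x"
  unfolding bil_def using assms
  by (subst sum.swap) (simp add: mult.commute mult.left_commute)

lemma latt_add: "x \<in> latt \<Longrightarrow> y \<in> latt \<Longrightarrow> (\<lambda>i. x i + y i) \<in> latt"
  by (auto simp: latt_def)

lemma latt_diff: "x \<in> latt \<Longrightarrow> y \<in> latt \<Longrightarrow> (\<lambda>i. x i - y i) \<in> latt"
  by (auto simp: latt_def)

lemma latt_zero: "(\<lambda>i. 0) \<in> latt"
  by (auto simp: latt_def)

lemma bil_latt_Ints: "x \<in> latt \<Longrightarrow> y \<in> latt \<Longrightarrow> bil G x y \<in> \<int>"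
  unfolding bil_def latt_def by (intro Ints_sum Ints_mult) auto

lemma bil_dual_Ints: "x \<in> dual G \<Longrightarrow> y \<in> latt \<Longrightarrow> bil G x y \<in> \<int>"
  by (simp add: dual_def)

lemma chars_parity:
  assumes "c \<in> chars G" "y \<in> latt"
  obtains k :: int where "bil G c y - bil G y y = 2 * of_int k"
  using assms by (auto simp: chars_def)

definition lat_coset :: "('n::finite \<Rightarrow> rat) \<Rightarrow> ('n \<Rightarrow> rat) set" where
  "lat_coset x = {(\<lambda>i. x i + y i) | y. y \<in> latt}"

definition char_class :: "('n::finite \<Rightarrow> rat) \<Rightarrow> ('n \<Rightarrow> rat) set" where
  "char_class c = {(\<lambda>i. c i + 2 * y i) | y. y \<in> latt}"

lemma lat_coset_memI: "y \<in> latt \<Longrightarrow> (\<lambda>i. x i + y i) \<in> lat_coset x"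
  unfolding lat_coset_def by blast

lemma char_class_memI: "y \<in> latt \<Longrightarrow> (\<lambda>i. c i + 2 * y i) \<in> char_class c"
  unfolding char_class_def by blast

lemma char_diff_memI: "a \<in> A \<Longrightarrow> b \<in> B \<Longrightarrow> (\<lambda>i. (a i - b i) / 2) \<in> char_diff A B"
  unfolding char_diff_def by blast

lemma disc_eq_image: "disc G = lat_coset ` dual G"
  unfolding disc_def lat_coset_def by auto

lemma charclasses_eq_image: "charclasses G = char_class ` chars G"
  unfolding charclasses_def char_class_def by auto

lemma lat_coset_eqD:
  assumes "lat_coset a = lat_coset b"
  shows "(\<lambda>i. a i - b i) \<in> latt"
proof -
  have "a \<in> lat_coset b"
    using lat_coset_memI[OF latt_zero, of a] assms by simp
  then obtain y where "y \<in> latt" "a = (\<lambda>i. b i + y i)"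
    unfolding lat_coset_def by auto
  then show ?thesis by simp
qed

lemma char_class_shift:
  assumes "u \<in> latt"
  shows "char_class (\<lambda>i. c i + 2 * u i) = char_class c"
proof (intro equalityI subsetI)
  fix z assume "z \<in> char_class (\<lambda>i. c i + 2 * u i)"
  then obtain y where y: "y \<in> latt" "z = (\<lambda>i. c i + 2 * u i + 2 * y i)"
    unfolding char_class_def by blast
  then have z: "z = (\<lambda>i. c i + 2 * (u i + y i))"
    by (simp add: algebra_simps)
  show "z \<in> char_class c"
    unfolding z by (rule char_class_memI[OF latt_add[OF assms y(1)]])
next
  fix z assume "z \<in> char_class c"
  then obtain y where y: "y \<in> latt" "z = (\<lambda>i. c i + 2 * y i)"
    unfolding char_class_def by blast
  then have z: "z = (\<lambda>i. (c i + 2 * u i) + 2 * (y i - u i))"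
    by (simp add: algebra_simps)
  show "z \<in> char_class (\<lambda>i. c i + 2 * u i)"
    unfolding z by (rule char_class_memI[OF latt_diff[OF y(1) assms]])
qed

lemma char_diff_char_class:
  "char_diff (char_class a) (char_class b) = lat_coset (\<lambda>i. (a i - b i) / 2)"
proof (intro equalityI subsetI)
  fix z assume "z \<in> char_diff (char_class a) (char_class b)"
  then obtain y y' where "y \<in> latt" "y' \<in> latt"
    and z: "z = (\<lambda>i. ((a i + 2 * y i) - (b i + 2 * y' i)) / 2)"
    unfolding char_diff_def char_class_def by blast
  moreover have "z = (\<lambda>i. (a i - b i) / 2 + (y i - y' i))"
    unfolding z by (simp add: field_simps)
  ultimately show "z \<in> lat_coset (\<lambda>i. (a i - b i) / 2)"
    using lat_coset_memI latt_diff by metis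
next
  fix z assume "z \<in> lat_coset (\<lambda>i. (a i - b i) / 2)"
  then obtain y where y: "y \<in> latt" and z: "z = (\<lambda>i. (a i - b i) / 2 + y i)"
    unfolding lat_coset_def by blast
  have z': "z = (\<lambda>i. ((a i + 2 * y i) - (b i + 2 * 0)) / 2)"
    unfolding z by (simp add: field_simps)
  show "z \<in> char_diff (char_class a) (char_class b)"
    unfolding z' by (intro char_diff_memI char_class_memI y latt_zero)
qed

lemma chars_add_dual:
  assumes c: "c \<in> chars G" and x: "x \<in> dual G"
  shows "(\<lambda>i. c i + 2 * x i) \<in> chars G"
proof -
  have "c \<in> dual G" using c by (simp add: chars_def)
  then have "(\<lambda>i. c i + 2 * x i) \<in> dual G"
    using x by (auto simp: dual_def bil_add_left bil_scale_left)
  moreover have "\<exists>k::int. bil G (\<lambda>i. c i + 2 * x i) y - bil G y y = 2 * of_int k"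
    if y: "y \<in> latt" for y
  proof -
    obtain k where k: "bil G c y - bil G y y = 2 * of_int k"
      using chars_parity[OF c y] .
    obtain m where m: "bil G x y = of_int m"
      using bil_dual_Ints[OF x y] by (auto elim: Ints_cases)
    have "bil G (\<lambda>i. c i + 2 * x i) y = bil G c y + 2 * bil G x y"
      by (simp only: bil_add_left bil_scale_left)
    then have "bil G (\<lambda>i. c i + 2 * x i) y - bil G y y = 2 * of_int (k + m)"
      using k m by (simp add: algebra_simps)
    then show ?thesis ..
  qed
  ultimately show ?thesis by (simp add: chars_def)
qed

lemma half_diff_chars_in_dual:
  fixes G :: "'n::finite \<Rightarrow> 'n \<Rightarrow> int"
  assumes a: "a \<in> chars G" and b: "b \<in> chars G"
  shows "(\<lambda>i. (a i - b i) / 2) \<in> dual G"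
  unfolding dual_def
proof (intro CollectI ballI)
  fix y :: "'n \<Rightarrow> rat" assume y: "y \<in> latt"
  obtain k where k: "bil G a y - bil G y y = 2 * of_int k" using chars_parity[OF a y] .
  obtain m where m: "bil G b y - bil G y y = 2 * of_int m" using chars_parity[OF b y] .
  have "bil G (\<lambda>i. (a i - b i) / 2) y = of_int (k - m)"
    using k m by (simp add: bil_half_left bil_diff_left field_simps)
  then show "bil G (\<lambda>i. (a i - b i) / 2) y \<in> \<int>" by simp
qed

lemma bil_represents_functional:
  fixes G :: "'n::finite \<Rightarrow> 'n \<Rightarrow> int" and w :: "'n \<Rightarrow> rat"
  assumes "is_int_lattice G"
  obtains c where "\<And>y. bil G c y = (\<Sum>j\<in>UNIV. w j * y j)"
proof -
  have sym: "\<forall>i j. G i j = G j i" and nondeg: "\<forall>x. (\<forall>y. bil G x y = 0) \<longrightarrow> x = (\<lambda>i. 0)"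
    using assms by (auto simp: is_int_lattice_def)
  define M :: "rat^'n^'n" where "M = (\<chi> i j. rat_of_int (G i j))"
  have bil_M: "bil G (\<lambda>i. v $ i) y = (\<Sum>j\<in>UNIV. (M *v v) $ j * y j)" for v y
  proof -
    have "bil G (\<lambda>i. v $ i) y = (\<Sum>j\<in>UNIV. \<Sum>i\<in>UNIV. v $ i * of_int (G i j) * y j)"
      unfolding bil_def by (rule sum.swap)
    also have "\<dots> = (\<Sum>j\<in>UNIV. (\<Sum>i\<in>UNIV. M $ j $ i * v $ i) * y j)"
      using sym by (simp add: M_def sum_distrib_left sum_distrib_right ac_simps)
    finally show ?thesis by (simp add: matrix_vector_mult_def)
  qed
  have "inj ((*v) M)"
  proof (rule injI)
    fix v v' assume "M *v v = M *v v'"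
    then have "M *v (v - v') = 0" by (simp add: matrix_vector_mult_diff_distrib)
    then have "\<forall>y. bil G (\<lambda>i. (v - v') $ i) y = 0" by (simp only: bil_M) simp
    then have "(\<lambda>i. (v - v') $ i) = (\<lambda>i. 0)" using nondeg by blast
    then show "v = v'" by (simp add: vec_eq_iff fun_eq_iff)
  qed
  then have "surj ((*v) M)"
    by (rule vec.linear_inj_imp_surj[OF matrix_vector_mul_linear_gen])
  then obtain v where "M *v v = (\<chi> j. w j)" by (metis surjD)
  then have "bil G (\<lambda>i. v $ i) y = (\<Sum>j\<in>UNIV. w j * y j)" for y
    by (simp add: bil_M)
  then show ?thesis using that by blast
qed

text \<open>The integral form of Wu's formula: \<open>|y| \<equiv> \<Sum>\<^sub>j G\<^sub>j\<^sub>j y\<^sub>j\<close> mod 2, since the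
  off-diagonal terms come in equal pairs and \<open>z\<^sup>2 \<equiv> z\<close> mod 2.\<close>
lemma even_quadratic_minus_diagonal:
  fixes G :: "'n \<Rightarrow> 'n \<Rightarrow> int" and z :: "'n \<Rightarrow> int"
  assumes sym: "\<forall>i j. G i j = G j i" and "finite S"
  shows "even ((\<Sum>i\<in>S. \<Sum>j\<in>S. z i * G i j * z j) - (\<Sum>j\<in>S. G j j * z j))"
  using \<open>finite S\<close>
proof (induction S rule: finite_induct)
  case empty
  show ?case by simp
next
  case (insert a S)
  have swap: "(\<Sum>i\<in>S. z i * G i a * z a) = (\<Sum>j\<in>S. z a * G a j * z j)"
    using sym by (intro sum.cong refl) (metis mult.commute mult.left_commute)
  have split: "(\<Sum>i\<in>insert a S. \<Sum>j\<in>insert a S. z i * G i j * z j)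
    = z a * G a a * z a + (\<Sum>j\<in>S. z a * G a j * z j)
      + ((\<Sum>i\<in>S. z i * G i a * z a) + (\<Sum>i\<in>S. \<Sum>j\<in>S. z i * G i j * z j))"
    using insert.hyps by (simp add: sum.distrib)
  have "(\<Sum>i\<in>insert a S. \<Sum>j\<in>insert a S. z i * G i j * z j) - (\<Sum>j\<in>insert a S. G j j * z j)
    = ((\<Sum>i\<in>S. \<Sum>j\<in>S. z i * G i j * z j) - (\<Sum>j\<in>S. G j j * z j))
      + 2 * (\<Sum>j\<in>S. z a * G a j * z j) + G a a * (z a * (z a - 1))"
    unfolding split swap using insert.hyps by (simp add: algebra_simps)
  moreover have "even (z a * (z a - 1))" by simp
  ultimately show ?case using insert.IH by simp
qed

lemma chars_nonempty:
  fixes G :: "'n::finite \<Rightarrow> 'n \<Rightarrow> int"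
  assumes "is_int_lattice G"
  obtains c where "c \<in> chars G"
proof -
  have sym: "\<forall>i j. G i j = G j i" using assms by (simp add: is_int_lattice_def)
  obtain c where c: "\<And>y. bil G c y = (\<Sum>j\<in>UNIV. of_int (G j j) * y j)"
    using bil_represents_functional[OF assms, of "\<lambda>j. of_int (G j j)"] by auto
  have "c \<in> dual G"
    unfolding dual_def latt_def by (auto simp: c intro!: Ints_sum Ints_mult)
  moreover have "\<exists>k::int. bil G c y - bil G y y = 2 * of_int k" if "y \<in> latt" for y
  proof -
    have "\<forall>i. \<exists>k. y i = of_int k" using that by (auto simp: latt_def elim: Ints_cases)
    then obtain z where z: "y = (\<lambda>i. of_int (z i))" by metis
    have "even ((\<Sum>i\<in>UNIV. \<Sum>j\<in>UNIV. z i * G i j * z j) - (\<Sum>j\<in>UNIV. G j j * z j))"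
      by (rule even_quadratic_minus_diagonal[OF sym]) simp
    then obtain k
      where k: "(\<Sum>i\<in>UNIV. \<Sum>j\<in>UNIV. z i * G i j * z j) - (\<Sum>j\<in>UNIV. G j j * z j) = 2 * k" ..
    have "bil G c y - bil G y y
      = of_int ((\<Sum>j\<in>UNIV. G j j * z j) - (\<Sum>i\<in>UNIV. \<Sum>j\<in>UNIV. z i * G i j * z j))"
      unfolding c by (simp add: z bil_def)
    also have "\<dots> = 2 * of_int (- k)"
      using k by (simp add: algebra_simps)
    finally show ?thesis ..
  qed
  ultimately show ?thesis using that by (auto simp: chars_def)
qed

definition rho_value :: "('n::finite \<Rightarrow> 'n \<Rightarrow> int) \<Rightarrow> ('n \<Rightarrow> rat) \<Rightarrow> rat" where
  "rho_value G c = (bil G c c - of_int (signature G)) / 4"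

lemma rho_char_class:
  assumes sym: "\<forall>i j. G i j = G j i" and c: "c \<in> chars G"
  shows "rho G (char_class c) = {rho_value G c + 2 * of_int k | k. True}"
proof (intro equalityI subsetI)
  fix r assume "r \<in> rho G (char_class c)"
  then obtain y k where y: "y \<in> latt"
    and r: "r = (bil G (\<lambda>i. c i + 2 * y i) (\<lambda>i. c i + 2 * y i) - of_int (signature G)) / 4 + 2 * of_int k"
    unfolding rho_def char_class_def by blast
  obtain m where m: "bil G c y - bil G y y = 2 * of_int m" using chars_parity[OF c y] .
  obtain n where n: "bil G y y = of_int n" using bil_latt_Ints[OF y y] by (auto elim: Ints_cases)
  have "bil G (\<lambda>i. c i + 2 * y i) (\<lambda>i. c i + 2 * y i) = bil G c c + 4 * (bil G c y + bil G y y)"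
    by (simp only: bil_add_left bil_add_right bil_scale_left bil_scale_right bil_commute[OF sym, of y c])
      (simp add: algebra_simps)
  then have "r = rho_value G c + 2 * of_int (k + m + n)"
    unfolding r rho_value_def using m n by (simp add: field_simps)
  then show "r \<in> {rho_value G c + 2 * of_int k | k. True}" by blast
next
  fix r assume "r \<in> {rho_value G c + 2 * of_int k | k. True}"
  moreover have "(\<lambda>i. c i + 2 * 0) \<in> char_class c" by (rule char_class_memI[OF latt_zero])
  ultimately show "r \<in> rho G (char_class c)"
    unfolding rho_def rho_value_def by force
qed

lemma disc_form_lat_coset:
  assumes sym: "\<forall>i j. G i j = G j i" and x: "x \<in> dual G" and y: "y \<in> dual G"
  shows "disc_form G (lat_coset x) (lat_coset y) = {bil G x y + of_int k | k. True}"
proof (intro equalityI subsetI)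
  fix r assume "r \<in> disc_form G (lat_coset x) (lat_coset y)"
  then obtain u v k where u: "u \<in> latt" and v: "v \<in> latt"
    and r: "r = bil G (\<lambda>i. x i + u i) (\<lambda>i. y i + v i) + of_int k"
    unfolding disc_form_def lat_coset_def by blast
  obtain a where a: "bil G x v = of_int a" using bil_dual_Ints[OF x v] by (auto elim: Ints_cases)
  obtain b where b: "bil G y u = of_int b" using bil_dual_Ints[OF y u] by (auto elim: Ints_cases)
  obtain c where c: "bil G u v = of_int c" using bil_latt_Ints[OF u v] by (auto elim: Ints_cases)
  have "r = bil G x y + of_int (a + b + c + k)"
    unfolding r by (simp add: bil_add_left bil_add_right bil_commute[OF sym, of u y] a b c)
  then show "r \<in> {bil G x y + of_int k | k. True}" by blast
next
  fix r assume "r \<in> {bil G x y + of_int k | k. True}"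
  moreover have "(\<lambda>i. x i + 0) \<in> lat_coset x" "(\<lambda>i. y i + 0) \<in> lat_coset y"
    by (rule lat_coset_memI[OF latt_zero])+
  ultimately show "r \<in> disc_form G (lat_coset x) (lat_coset y)"
    unfolding disc_form_def by force
qed

lemma rho_value_polarization:
  assumes sym: "\<forall>i j. G i j = G j i"
  shows "rho_value G (\<lambda>i. c i + 2 * x i + 2 * y i) - rho_value G (\<lambda>i. c i + 2 * x i)
      - rho_value G (\<lambda>i. c i + 2 * y i) + rho_value G c = 2 * bil G x y"
  unfolding rho_value_def
  by (simp only: bil_add_left bil_add_right bil_scale_left bil_scale_right
      bil_commute[OF sym, of x c] bil_commute[OF sym, of y c] bil_commute[OF sym, of y x])
    (simp add: field_simps)

text \<open>The arguments are cosets of \<open>2\<int>\<close> (values of \<open>\<rho>\<close>), so the result is a coset of \<open>\<int>\<close>.\<close>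
definition rho_polar :: "rat set \<Rightarrow> rat set \<Rightarrow> rat set \<Rightarrow> rat set \<Rightarrow> rat set" where
  "rho_polar R0 R1 R2 R3 = {(r3 - r1 - r2 + r0) / 2 + of_int k | r0 r1 r2 r3 k.
     r0 \<in> R0 \<and> r1 \<in> R1 \<and> r2 \<in> R2 \<and> r3 \<in> R3}"

lemma rho_polar_cosets:
  "rho_polar {a0 + 2 * of_int k | k. True} {a1 + 2 * of_int k | k. True}
     {a2 + 2 * of_int k | k. True} {a3 + 2 * of_int k | k. True}
   = {(a3 - a1 - a2 + a0) / 2 + of_int k | k::int. True}"
proof (intro equalityI subsetI)
  fix r assume "r \<in> rho_polar {a0 + 2 * of_int k | k. True} {a1 + 2 * of_int k | k. True}
     {a2 + 2 * of_int k | k. True} {a3 + 2 * of_int k | k. True}"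
  then obtain k0 k1 k2 k3 k :: int where "r = ((a3 + 2 * of_int k3) - (a1 + 2 * of_int k1)
      - (a2 + 2 * of_int k2) + (a0 + 2 * of_int k0)) / 2 + of_int k"
    unfolding rho_polar_def by blast
  then have "r = (a3 - a1 - a2 + a0) / 2 + of_int (k3 - k1 - k2 + k0 + k)"
    by (simp add: field_simps)
  then show "r \<in> {(a3 - a1 - a2 + a0) / 2 + of_int k | k::int. True}" by blast
next
  fix r assume "r \<in> {(a3 - a1 - a2 + a0) / 2 + of_int k | k::int. True}"
  then show "r \<in> rho_polar {a0 + 2 * of_int k | k. True} {a1 + 2 * of_int k | k. True}
     {a2 + 2 * of_int k | k. True} {a3 + 2 * of_int k | k. True}"
    unfolding rho_polar_def by force
qed

lemma disc_form_eq_rho_polar: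
  assumes sym: "\<forall>i j. G i j = G j i"
    and C: "C0 \<in> charclasses G" "C1 \<in> charclasses G" "C2 \<in> charclasses G" "C3 \<in> charclasses G"
    and X: "char_diff C1 C0 = X" and Y: "char_diff C2 C0 = Y" "char_diff C3 C1 = Y"
  shows "disc_form G X Y = rho_polar (rho G C0) (rho G C1) (rho G C2) (rho G C3)"
proof -
  obtain a0 a1 a2 a3 where a: "a0 \<in> chars G" "a1 \<in> chars G" "a2 \<in> chars G" "a3 \<in> chars G"
    and Ca: "C0 = char_class a0" "C1 = char_class a1" "C2 = char_class a2" "C3 = char_class a3"
    using C unfolding charclasses_eq_image by blast
  define x where "x = (\<lambda>i. (a1 i - a0 i) / 2)"
  define y where "y = (\<lambda>i. (a2 i - a0 i) / 2)"
  have dual: "x \<in> dual G" "y \<in> dual G"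
    unfolding x_def y_def using half_diff_chars_in_dual a by blast+
  have a1: "a1 = (\<lambda>i. a0 i + 2 * x i)" and a2: "a2 = (\<lambda>i. a0 i + 2 * y i)"
    by (simp_all add: x_def y_def fun_eq_iff field_simps)
  have "lat_coset (\<lambda>i. (a3 i - a1 i) / 2) = lat_coset y"
    using Y unfolding Ca y_def char_diff_char_class by simp
  then have u: "(\<lambda>i. (a3 i - a1 i) / 2 - y i) \<in> latt" by (rule lat_coset_eqD)
  have "C3 = char_class (\<lambda>i. (a0 i + 2 * x i + 2 * y i) + 2 * ((a3 i - a1 i) / 2 - y i))"
    unfolding Ca a1 by (simp add: field_simps)
  then have C3: "C3 = char_class (\<lambda>i. a0 i + 2 * x i + 2 * y i)"
    unfolding char_class_shift[OF u] .
  have "rho_polar (rho G C0) (rho G C1) (rho G C2) (rho G C3) = {bil G x y + of_int k | k. True}"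
    unfolding C3 Ca(1-3) a1 a2
    using rho_char_class[OF sym] chars_add_dual[OF a(1)] chars_add_dual[OF chars_add_dual[OF a(1)]]
      rho_value_polarization[OF sym, of a0 x y] rho_polar_cosets dual a(1)
    by simp
  moreover have "disc_form G X Y = {bil G x y + of_int k | k. True}"
    using X Y(1) disc_form_lat_coset[OF sym dual]
    unfolding Ca char_diff_char_class x_def y_def by simp
  ultimately show ?thesis by simp
qed

lemma char_class_square:
  assumes "is_int_lattice G" and X: "X \<in> disc G" and Y: "Y \<in> disc G"
  obtains C0 C1 C2 C3 where
    "C0 \<in> charclasses G" "C1 \<in> charclasses G" "C2 \<in> charclasses G" "C3 \<in> charclasses G"
    "char_diff C1 C0 = X" "char_diff C2 C0 = Y" "char_diff C3 C1 = Y"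
proof -
  obtain x y where xy: "x \<in> dual G" "y \<in> dual G" "X = lat_coset x" "Y = lat_coset y"
    using X Y unfolding disc_eq_image by blast
  obtain c where c: "c \<in> chars G" using chars_nonempty[OF assms(1)] .
  have "char_class (\<lambda>i. c i + 2 * x i + 2 * y i) \<in> charclasses G"
    "char_class (\<lambda>i. c i + 2 * x i) \<in> charclasses G"
    "char_class (\<lambda>i. c i + 2 * y i) \<in> charclasses G" "char_class c \<in> charclasses G"
    unfolding charclasses_eq_image
    using c chars_add_dual[OF c] chars_add_dual[OF chars_add_dual[OF c]] xy by blast+
  then show ?thesis
    using that[of "char_class c" "char_class (\<lambda>i. c i + 2 * x i)"
        "char_class (\<lambda>i. c i + 2 * y i)" "char_class (\<lambda>i. c i + 2 * x i + 2 * y i)"]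
    unfolding char_diff_char_class xy by simp
qed

lemma rho_iso_preserves_disc_form:
  assumes L1: "is_int_lattice G1" and L2: "is_int_lattice G2"
    and iso: "rho_iso G1 G2 phiC phiD"
    and X: "X \<in> disc G1" and Y: "Y \<in> disc G1"
  shows "disc_form G2 (phiD X) (phiD Y) = disc_form G1 X Y"
proof -
  have sym1: "\<forall>i j. G1 i j = G1 j i" and sym2: "\<forall>i j. G2 i j = G2 j i"
    using L1 L2 by (simp_all add: is_int_lattice_def)
  have bij: "bij_betw phiC (charclasses G1) (charclasses G2)"
    and rho_eq: "\<And>C. C \<in> charclasses G1 \<Longrightarrow> rho G2 (phiC C) = rho G1 C"
    and diff: "\<And>C C'. C \<in> charclasses G1 \<Longrightarrow> C' \<in> charclasses G1 \<Longrightarrow>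
      char_diff (phiC C) (phiC C') = phiD (char_diff C C')"
    using iso unfolding rho_iso_def by simp_all
  obtain C0 C1 C2 C3 where C: "C0 \<in> charclasses G1" "C1 \<in> charclasses G1"
      "C2 \<in> charclasses G1" "C3 \<in> charclasses G1"
    and XY: "char_diff C1 C0 = X" "char_diff C2 C0 = Y" "char_diff C3 C1 = Y"
    using char_class_square[OF L1 X Y] .
  have C': "phiC C0 \<in> charclasses G2" "phiC C1 \<in> charclasses G2"
      "phiC C2 \<in> charclasses G2" "phiC C3 \<in> charclasses G2"
    using bij_betw_apply[OF bij] C by blast+
  have XY': "char_diff (phiC C1) (phiC C0) = phiD X" "char_diff (phiC C2) (phiC C0) = phiD Y"
      "char_diff (phiC C3) (phiC C1) = phiD Y"
    using diff[OF C(2,1)] diff[OF C(3,1)] diff[OF C(4,2)] XY by simp_all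
  have "disc_form G2 (phiD X) (phiD Y)
      = rho_polar (rho G2 (phiC C0)) (rho G2 (phiC C1)) (rho G2 (phiC C2)) (rho G2 (phiC C3))"
    by (rule disc_form_eq_rho_polar[OF sym2 C' XY'])
  also have "\<dots> = rho_polar (rho G1 C0) (rho G1 C1) (rho G1 C2) (rho G1 C3)"
    using rho_eq C by simp
  also have "\<dots> = disc_form G1 X Y"
    by (rule disc_form_eq_rho_polar[OF sym1 C XY, symmetric])
  finally show ?thesis .
qed

theorem lemma2p3:
  fixes G1 :: "'n::finite \<Rightarrow> 'n \<Rightarrow> int" and G2 :: "'m::finite \<Rightarrow> 'm \<Rightarrow> int"
    and phiC phiD :: "('n \<Rightarrow> rat) set \<Rightarrow> ('m \<Rightarrow> rat) set"
  assumes "is_int_lattice G1" and "is_int_lattice G2"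
    and "rho_iso G1 G2 phiC phiD"
  shows "disc_form_iso G1 G2 phiD"
proof -
  have "bij_betw phiD (disc G1) (disc G2)"
    and "\<forall>X\<in>disc G1. \<forall>Y\<in>disc G1. phiD (coset_add X Y) = coset_add (phiD X) (phiD Y)"
    using assms(3) unfolding rho_iso_def by simp_all
  then show ?thesis
    unfolding disc_form_iso_def using rho_iso_preserves_disc_form[OF assms] by simp
qed

end
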